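(* Let $\mathbf{A}$ be an atomic symmetric integral relation algebra that contains a flexible trio. Then $\mathbf{A}$ has the 1-point extension property and $\mathbf{A}$ is representable.
   Context: Relation algebras are in the sense of Tarski; $1'$ identity, $0'$ its complement (diversity element), $;$ relative product; integral: $1'$ is an atom; symmetric: $x^{\smile}=x$ for all $x$; a diversity atom is an atom below $0'$; representable: isomorphic to an algebra of binary relations. Flexible trio: three diversity atoms $a,b,c$ such that $a;a=b;b=c;c=1$, $a;b=a;c=b;c=0'$, and for every atom $x\notin\{1',a,b,c\}$: ($x;a=x;b=0'$) or ($x;a=x;c=0'$) or ($x;b=x;c=0'$). 1-point extension property: for $k<\omega$, $B_k(\mathbf{A})$ is the set of maps $\mu:k\times k\to At(\mathbf{A})$ with $\mu_{i,i}\le1'$, $\mu_{i,j}^{\smile}=\mu_{j,i}$ and $\mu_{i,l};\mu_{l,j}\ge\mu_{i,j}$ for all $i,j,l<k$; $\mu$ satisfies the identity condition if $\mu_{l,m}=1'$ iff $l=m$. $\mathbf{A}$ has the 1-point extension property if whenever $\mu\in B_k(\mathbf{A})$ satisfies the identity condition, $x,y$ are diversity atoms, $i,j<k$, $i\ne j$, and $\mu_{i,j}\le x;y$, there is $\mu'\in B_{k+1}(\mathbf{A})$ satisfying the identity condition with $\mu'_{l,m}=\mu_{l,m}$ for all $l,m<k$, $\mu'_{i,k}=x$ and $\mu'_{k,j}=y$. *)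

theory Defs
  imports Main
begin

text \<open>The Boolean reduct is the ambient type
  'a of class boolean_algebra (join = sup, complement = uminus, 0 = bot, 1 = top);
  the extra operations are the identity element e (written 1'), converse cv and
  relative product cp (written ;).\<close>

definition rel_alg :: "'a::boolean_algebra \<Rightarrow> ('a \<Rightarrow> 'a) \<Rightarrow> ('a \<Rightarrow> 'a \<Rightarrow> 'a) \<Rightarrow> bool" where
  "rel_alg e cv cp \<longleftrightarrow>
     (\<forall>x y z. cp (cp x y) z = cp x (cp y z)) \<and>
     (\<forall>x y z. cp (sup x y) z = sup (cp x z) (cp y z)) \<and>
     (\<forall>x. cp x e = x) \<and>
     (\<forall>x. cv (cv x) = x) \<and>
     (\<forall>x y. cv (sup x y) = sup (cv x) (cv y)) \<and>
     (\<forall>x y. cv (cp x y) = cp (cv y) (cv x)) \<and>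
     (\<forall>x y. sup (cp (cv x) (- (cp x y))) (- y) = - y)"

definition is_atom :: "'a::boolean_algebra \<Rightarrow> bool" where
  "is_atom x \<longleftrightarrow> x \<noteq> bot \<and> (\<forall>y. y \<le> x \<longrightarrow> y = bot \<or> y = x)"

definition atomic_ba :: "'a::boolean_algebra itself \<Rightarrow> bool" where
  "atomic_ba _ \<longleftrightarrow> (\<forall>x::'a. x \<noteq> bot \<longrightarrow> (\<exists>y. is_atom y \<and> y \<le> x))"

definition integral_ra :: "'a::boolean_algebra \<Rightarrow> bool" where
  "integral_ra e \<longleftrightarrow> is_atom e"

definition symmetric_ra :: "('a::boolean_algebra \<Rightarrow> 'a) \<Rightarrow> bool" where
  "symmetric_ra cv \<longleftrightarrow> (\<forall>x. cv x = x)"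

definition div_atom :: "'a::boolean_algebra \<Rightarrow> 'a \<Rightarrow> bool" where
  "div_atom e x \<longleftrightarrow> is_atom x \<and> x \<le> - e"

definition flexible_trio :: "'a::boolean_algebra \<Rightarrow> ('a \<Rightarrow> 'a \<Rightarrow> 'a) \<Rightarrow> 'a \<Rightarrow> 'a \<Rightarrow> 'a \<Rightarrow> bool" where
  "flexible_trio e cp a b c \<longleftrightarrow>
     div_atom e a \<and> div_atom e b \<and> div_atom e c \<and> a \<noteq> b \<and> a \<noteq> c \<and> b \<noteq> c \<and>
     cp a a = top \<and> cp b b = top \<and> cp c c = top \<and>
     cp a b = - e \<and> cp a c = - e \<and> cp b c = - e \<and>
     (\<forall>x. is_atom x \<and> x \<notin> {e, a, b, c} \<longrightarrow>
        (cp x a = - e \<and> cp x b = - e) \<or> (cp x a = - e \<and> cp x c = - e) \<or>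
        (cp x b = - e \<and> cp x c = - e))"

definition has_flexible_trio :: "'a::boolean_algebra \<Rightarrow> ('a \<Rightarrow> 'a \<Rightarrow> 'a) \<Rightarrow> bool" where
  "has_flexible_trio e cp \<longleftrightarrow> (\<exists>a b c. flexible_trio e cp a b c)"

text \<open>B_k(A): maps k x k -> At(A), represented as functions nat => nat => 'a
  restricted to indices below k.\<close>
definition basic_net :: "'a::boolean_algebra \<Rightarrow> ('a \<Rightarrow> 'a) \<Rightarrow> ('a \<Rightarrow> 'a \<Rightarrow> 'a) \<Rightarrow> nat \<Rightarrow> (nat \<Rightarrow> nat \<Rightarrow> 'a) \<Rightarrow> bool" where
  "basic_net e cv cp k \<mu> \<longleftrightarrow>
     (\<forall>i<k. \<forall>j<k. is_atom (\<mu> i j)) \<and>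
     (\<forall>i<k. \<mu> i i \<le> e) \<and>
     (\<forall>i<k. \<forall>j<k. cv (\<mu> i j) = \<mu> j i) \<and>
     (\<forall>i<k. \<forall>j<k. \<forall>l<k. \<mu> i j \<le> cp (\<mu> i l) (\<mu> l j))"

definition identity_cond :: "'a::boolean_algebra \<Rightarrow> nat \<Rightarrow> (nat \<Rightarrow> nat \<Rightarrow> 'a) \<Rightarrow> bool" where
  "identity_cond e k \<mu> \<longleftrightarrow> (\<forall>l<k. \<forall>m<k. \<mu> l m = e \<longleftrightarrow> l = m)"

definition one_point_ext :: "'a::boolean_algebra \<Rightarrow> ('a \<Rightarrow> 'a) \<Rightarrow> ('a \<Rightarrow> 'a \<Rightarrow> 'a) \<Rightarrow> bool" where
  "one_point_ext e cv cp \<longleftrightarrow>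
     (\<forall>k \<mu> x y i j.
        basic_net e cv cp k \<mu> \<and> identity_cond e k \<mu> \<and>
        div_atom e x \<and> div_atom e y \<and> i < k \<and> j < k \<and> i \<noteq> j \<and>
        \<mu> i j \<le> cp x y \<longrightarrow>
        (\<exists>\<mu>'. basic_net e cv cp (Suc k) \<mu>' \<and> identity_cond e (Suc k) \<mu>' \<and>
              (\<forall>l<k. \<forall>m<k. \<mu>' l m = \<mu> l m) \<and> \<mu>' i k = x \<and> \<mu>' k j = y))"

text \<open>The base points are taken from the type 'a list, whose cardinality max(|'a|, aleph0)
  suffices for every representable algebra (downward Loewenheim-Skolem).\<close>
definition representable :: "'a::boolean_algebra \<Rightarrow> ('a \<Rightarrow> 'a) \<Rightarrow> ('a \<Rightarrow> 'a \<Rightarrow> 'a) \<Rightarrow> bool" where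
  "representable e cv cp \<longleftrightarrow>
     (\<exists>(U :: 'a list set) E (h :: 'a \<Rightarrow> ('a list \<times> 'a list) set).
        equiv U E \<and> inj h \<and>
        (\<forall>x. h x \<subseteq> E) \<and>
        (\<forall>x y. h (sup x y) = h x \<union> h y) \<and>
        (\<forall>x. h (- x) = E - h x) \<and>
        h e = Id_on U \<and>
        (\<forall>x. h (cv x) = (h x)\<inverse>) \<and>
        (\<forall>x y. h (cp x y) = h x O h y))"

end

theory Submission imports Defs begin

(* Every diversity atom x satisfies t;x \<ge> 0' for at least two atoms t of the flexible trio, so
  any two diversity atoms x, y have a common such t. In a 1-point extension the new point is
  joined to i by x, to j by y and to every other point by t; every triangle through the new
  point then involves t;x, t;y or t;t, all of which contain 0'.

  The same choice yields a representation directly. Its points are terms: an origin, and for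
  points p, q and diversity atoms x, y such that the label of pq lies below x;y, a new point
  joined to p by x and to q by y. Two points not joined this way are labelled by the trio atom
  chosen at the larger one, which is compatible with all edges from that point to the two
  points it was built from. Then every triangle is consistent and every consistent triangle
  over an edge is witnessed, i.e. the labelling is a perfect network, and the relations it
  induces represent the algebra. *)

section \<open>Symmetric integral relation algebras\<close>

lemma atom_nonzero: "is_atom x \<Longrightarrow> x \<noteq> bot"
  unfolding is_atom_def by simp

lemma atom_le_iff_inf_nonzero: "is_atom x \<Longrightarrow> x \<le> y \<longleftrightarrow> inf x y \<noteq> bot"
  unfolding is_atom_def by (metis inf.cobounded1 inf.absorb_iff1)

lemma atom_le_atom_iff: "is_atom x \<Longrightarrow> is_atom y \<Longrightarrow> x \<le> y \<longleftrightarrow> x = y"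
  unfolding is_atom_def by blast

lemma atom_le_sup_iff: "is_atom x \<Longrightarrow> x \<le> sup y z \<longleftrightarrow> x \<le> y \<or> x \<le> z"
  using atom_le_iff_inf_nonzero by (metis inf_sup_distrib1 le_supI1 le_supI2 sup_bot.right_neutral)

lemma atom_le_compl_iff: "is_atom x \<Longrightarrow> x \<le> - y \<longleftrightarrow> \<not> x \<le> y"
  using atom_le_iff_inf_nonzero by (metis inf_shunt le_iff_inf)

lemma relation_on_image_eqI:
  assumes "A \<subseteq> f ` P \<times> f ` P" "B \<subseteq> f ` P \<times> f ` P"
    and "\<And>p q. p \<in> P \<Longrightarrow> q \<in> P \<Longrightarrow> (f p, f q) \<in> A \<longleftrightarrow> (f p, f q) \<in> B"
  shows "A = B"
proof (intro equalityI subsetI)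
  fix z assume "z \<in> A"
  with assms(1,3) show "z \<in> B" by blast
next
  fix z assume "z \<in> B"
  with assms(2,3) show "z \<in> A" by blast
qed

locale symmetric_integral_ra =
  fixes e :: "'a::boolean_algebra" and cp :: "'a \<Rightarrow> 'a \<Rightarrow> 'a"
  assumes cp_commute: "cp x y = cp y x"
    and cp_sup_left: "cp (sup x y) z = sup (cp x z) (cp y z)"
    and cp_unit: "cp x e = x"
    and cp_tarski: "sup (cp x (- cp x y)) (- y) = - y"
    and atomic: "x \<noteq> bot \<Longrightarrow> \<exists>y. is_atom y \<and> y \<le> x"
    and atom_e: "is_atom e"
begin

lemma cp_mono_left: "x \<le> y \<Longrightarrow> cp x z \<le> cp y z"
  by (metis cp_sup_left sup.absorb_iff2 sup.cobounded1)

lemma cp_mono_right: "x \<le> y \<Longrightarrow> cp z x \<le> cp z y"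
  by (metis cp_commute cp_mono_left)

lemma cp_unit_left: "cp e x = x"
  by (metis cp_commute cp_unit)

lemma schroeder: "inf (cp x y) z = bot \<Longrightarrow> inf (cp x z) y = bot"
proof -
  assume "inf (cp x y) z = bot"
  then have "z \<le> - cp x y" by (simp add: inf_shunt inf_commute)
  then have "cp x z \<le> cp x (- cp x y)" by (rule cp_mono_right)
  also have "\<dots> \<le> - y" by (metis cp_tarski sup.absorb_iff2)
  finally show ?thesis by (simp add: inf_shunt)
qed

lemma atom_le_cp_rotate:
  assumes "is_atom x" "is_atom z" "x \<le> cp y z"
  shows "z \<le> cp y x"
proof -
  have "inf (cp y z) x \<noteq> bot"
    using assms atom_nonzero by (metis inf.absorb2)
  then have "inf (cp y x) z \<noteq> bot" using schroeder by blast
  then show ?thesis using assms(2) atom_le_iff_inf_nonzero by (metis inf_commute)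
qed

lemma e_le_cp_self: "x \<noteq> bot \<Longrightarrow> e \<le> cp x x"
proof (rule ccontr)
  assume "x \<noteq> bot" "\<not> e \<le> cp x x"
  then have "inf (cp x x) e = bot" using atom_le_iff_inf_nonzero[OF atom_e] by (metis inf_commute)
  then have "inf (cp x e) x = bot" by (rule schroeder)
  with \<open>x \<noteq> bot\<close> show False by (simp add: cp_unit)
qed

lemma atom_eq_if_e_le_cp: "is_atom x \<Longrightarrow> is_atom y \<Longrightarrow> e \<le> cp x y \<Longrightarrow> x = y"
  using atom_le_cp_rotate[of e y x] atom_e atom_le_atom_iff cp_unit by metis

lemma bot_neq_top: "(bot::'a) \<noteq> top"
  using atom_nonzero[OF atom_e] by (metis bot_unique top_greatest)

lemma div_atom_iff: "div_atom e x \<longleftrightarrow> is_atom x \<and> x \<noteq> e"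
  unfolding div_atom_def
  using atom_e atom_le_compl_iff atom_le_atom_iff by metis

lemma atom_le_cp_decompose:
  assumes "is_atom x" "x \<le> cp y z"
  obtains y' z' where "is_atom y'" "is_atom z'" "y' \<le> y" "z' \<le> z" "x \<le> cp y' z'"
proof -
  have "inf (cp y x) z \<noteq> bot"
    using assms schroeder atom_le_iff_inf_nonzero by (metis inf_commute)
  then obtain z' where z': "is_atom z'" "z' \<le> inf z (cp y x)"
    using atomic by (metis inf_commute)
  then have "inf (cp y z') x \<noteq> bot"
    using schroeder atom_le_iff_inf_nonzero by (metis inf_commute le_inf_iff)
  then have "inf (cp z' x) y \<noteq> bot" using schroeder cp_commute by metis
  then obtain y' where y': "is_atom y'" "y' \<le> inf y (cp z' x)"
    using atomic by (metis inf_commute)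
  then have "x \<le> cp y' z'"
    using atom_le_cp_rotate[of y' x z'] assms(1) cp_commute by simp
  with y' z' show thesis using that by simp
qed

definition cycle :: "'a \<Rightarrow> 'a \<Rightarrow> 'a \<Rightarrow> bool" where
  "cycle x y z \<longleftrightarrow> x \<le> cp y z \<and> y \<le> cp x z \<and> z \<le> cp x y"

lemma cycle_swap: "cycle x y z \<Longrightarrow> cycle y x z" "cycle x y z \<Longrightarrow> cycle x z y"
  unfolding cycle_def by (metis cp_commute)+

lemma cycle_if_atoms_le_cp:
  assumes "is_atom x" "is_atom y" "is_atom z" "x \<le> cp y z"
  shows "cycle x y z"
  using assms atom_le_cp_rotate[of x z y] atom_le_cp_rotate[of x y z]
  unfolding cycle_def by (metis cp_commute)

lemma network_le_cp_if_cycles: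
  assumes refl: "\<And>l. l \<in> S \<Longrightarrow> N l l = e"
    and sym: "\<And>l m. l \<in> S \<Longrightarrow> m \<in> S \<Longrightarrow> N l m = N m l"
    and atom: "\<And>l m. l \<in> S \<Longrightarrow> m \<in> S \<Longrightarrow> is_atom (N l m)"
    and cycles: "\<And>l m n. l \<in> S \<Longrightarrow> m \<in> S \<Longrightarrow> n \<in> S \<Longrightarrow> l \<noteq> m \<Longrightarrow> m \<noteq> n \<Longrightarrow> l \<noteq> n \<Longrightarrow>
        cycle (N l m) (N m n) (N l n)"
    and "l \<in> S" "m \<in> S" "n \<in> S"
  shows "N l m \<le> cp (N l n) (N n m)"
proof -
  consider "l = m" | "n = l" | "n = m" | "l \<noteq> m" "m \<noteq> n" "l \<noteq> n" by blast
  then show ?thesis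
  proof cases
    case 1
    then show ?thesis using assms e_le_cp_self atom_nonzero by metis
  next
    case 2
    then show ?thesis using assms(1,5) by (simp add: cp_unit_left)
  next
    case 3
    then show ?thesis using assms(1,6) by (simp add: cp_unit)
  next
    case 4
    then show ?thesis using cycles[OF assms(5,6,7)] sym[OF assms(6,7)] cp_commute
      unfolding cycle_def by metis
  qed
qed

definition extend_net :: "nat \<Rightarrow> (nat \<Rightarrow> nat \<Rightarrow> 'a) \<Rightarrow> (nat \<Rightarrow> 'a) \<Rightarrow> nat \<Rightarrow> nat \<Rightarrow> 'a" where
  "extend_net k \<mu> \<nu> l m =
     (if l < k \<and> m < k then \<mu> l m else if l < k then \<nu> l else if m < k then \<nu> m else e)"

lemma basic_net_div_atom:
  "basic_net e (\<lambda>x. x) cp k \<mu> \<Longrightarrow> identity_cond e k \<mu> \<Longrightarrow> l < k \<Longrightarrow> m < k \<Longrightarrow> l \<noteq> m \<Longrightarrow>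
    div_atom e (\<mu> l m)"
  unfolding basic_net_def identity_cond_def div_atom_iff by blast

context
  fixes k :: nat and \<mu> :: "nat \<Rightarrow> nat \<Rightarrow> 'a" and \<nu> :: "nat \<Rightarrow> 'a"
  assumes net: "basic_net e (\<lambda>x. x) cp k \<mu>" and idc: "identity_cond e k \<mu>"
    and \<nu>_div: "\<And>l. div_atom e (\<nu> l)"
begin

lemma identity_cond_extend_net: "identity_cond e (Suc k) (extend_net k \<mu> \<nu>)"
  using idc \<nu>_div div_atom_iff unfolding identity_cond_def extend_net_def by auto

context
  assumes \<nu>_le: "\<And>l m. l < k \<Longrightarrow> m < k \<Longrightarrow> l \<noteq> m \<Longrightarrow> \<mu> l m \<le> cp (\<nu> l) (\<nu> m)"
begin

lemma cycle_extend_net: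
  assumes bounds: "l < Suc k" "m < Suc k" "n < Suc k" and distinct: "l \<noteq> m" "m \<noteq> n" "l \<noteq> n"
  shows "cycle (extend_net k \<mu> \<nu> l m) (extend_net k \<mu> \<nu> m n) (extend_net k \<mu> \<nu> l n)"
proof -
  have atom: "is_atom (\<mu> l m)" and sym: "\<mu> l m = \<mu> m l" if "l < k" "m < k" for l m
    using net that unfolding basic_net_def by auto
  have old: "cycle (\<mu> l m) (\<mu> m n) (\<mu> l n)" if "l < k" "m < k" "n < k" for l m n
  proof -
    have "cycle (\<mu> l m) (\<mu> l n) (\<mu> n m)"
      by (rule cycle_if_atoms_le_cp) (use that atom net in \<open>auto simp: basic_net_def\<close>)
    then have "cycle (\<mu> l m) (\<mu> l n) (\<mu> m n)" using sym[of n m] that by simp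
    then show ?thesis by (rule cycle_swap(2))
  qed
  have new: "cycle (\<mu> l m) (\<nu> l) (\<nu> m)" if "l < k" "m < k" "l \<noteq> m" for l m
    by (rule cycle_if_atoms_le_cp) (use that atom \<nu>_div \<nu>_le in \<open>auto simp: div_atom_def\<close>)
  consider "l < k" "m < k" "n < k" | "l = k" | "m = k" | "n = k"
    using bounds less_Suc_eq by blast
  then show ?thesis
  proof cases
    case 1
    then show ?thesis using old unfolding extend_net_def by simp
  next
    case 2
    with bounds distinct have "m < k" "n < k" by auto
    then have "cycle (\<nu> m) (\<mu> m n) (\<nu> n)"
      using distinct by (intro cycle_swap(1)[OF new])
    with 2 \<open>m < k\<close> \<open>n < k\<close> show ?thesis unfolding extend_net_def by simp
  next
    case 3
    with bounds distinct have "l < k" "n < k" by auto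
    then have "cycle (\<nu> l) (\<nu> n) (\<mu> l n)"
      using distinct by (intro cycle_swap(2)[OF cycle_swap(1)[OF new]])
    with 3 \<open>l < k\<close> \<open>n < k\<close> show ?thesis unfolding extend_net_def by simp
  next
    case 4
    with bounds distinct have "l < k" "m < k" by auto
    then have "cycle (\<mu> l m) (\<nu> m) (\<nu> l)"
      using distinct by (intro cycle_swap(2)[OF new])
    with 4 \<open>l < k\<close> \<open>m < k\<close> show ?thesis unfolding extend_net_def by simp
  qed
qed

lemma basic_net_extend_net: "basic_net e (\<lambda>x. x) cp (Suc k) (extend_net k \<mu> \<nu>)"
proof -
  have atom: "is_atom (extend_net k \<mu> \<nu> l m)" if "l < Suc k" "m < Suc k" for l m
    using net \<nu>_div atom_e that unfolding extend_net_def div_atom_def basic_net_def by auto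
  have refl: "extend_net k \<mu> \<nu> l l = e" if "l < Suc k" for l
    using idc that unfolding extend_net_def identity_cond_def by auto
  have sym: "extend_net k \<mu> \<nu> l m = extend_net k \<mu> \<nu> m l" if "l < Suc k" "m < Suc k" for l m
    using net that unfolding extend_net_def basic_net_def by auto
  show ?thesis
    unfolding basic_net_def
    using atom refl sym network_le_cp_if_cycles[of "{..<Suc k}" "extend_net k \<mu> \<nu>"] cycle_extend_net
    by simp
qed

end

end

end

section \<open>Perfect networks\<close>

locale perfect_network = symmetric_integral_ra +
  fixes P :: "'p set" and L :: "'p \<Rightarrow> 'p \<Rightarrow> 'a"
  assumes points_nonempty: "P \<noteq> {}"
    and label_atom: "p \<in> P \<Longrightarrow> q \<in> P \<Longrightarrow> is_atom (L p q)"
    and label_eq_e_iff: "p \<in> P \<Longrightarrow> q \<in> P \<Longrightarrow> L p q = e \<longleftrightarrow> p = q"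
    and label_sym: "p \<in> P \<Longrightarrow> q \<in> P \<Longrightarrow> L p q = L q p"
    and label_le_cp: "p \<in> P \<Longrightarrow> q \<in> P \<Longrightarrow> r \<in> P \<Longrightarrow> L p q \<le> cp (L p r) (L r q)"
    and label_witness: "p \<in> P \<Longrightarrow> q \<in> P \<Longrightarrow> div_atom e x \<Longrightarrow> div_atom e y \<Longrightarrow> L p q \<le> cp x y \<Longrightarrow>
        \<exists>w\<in>P. L p w = x \<and> L w q = y"
begin

lemma label_witness_atoms:
  assumes "p \<in> P" "q \<in> P" "is_atom x" "is_atom y" "L p q \<le> cp x y"
  shows "\<exists>w\<in>P. L p w = x \<and> L w q = y"
proof (cases "x = e \<or> y = e")
  case True
  then show ?thesis
    using assms label_atom label_eq_e_iff atom_le_atom_iff cp_unit cp_unit_left by metis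
next
  case False
  then show ?thesis using assms label_witness div_atom_iff by blast
qed

lemma atom_realized: "is_atom x \<Longrightarrow> \<exists>p\<in>P. \<exists>q\<in>P. L p q = x"
  using points_nonempty label_eq_e_iff e_le_cp_self atom_nonzero label_witness_atoms by blast

definition network_relation :: "('p \<Rightarrow> 'b) \<Rightarrow> 'a \<Rightarrow> ('b \<times> 'b) set" where
  "network_relation f x = {(f p, f q) | p q. p \<in> P \<and> q \<in> P \<and> L p q \<le> x}"

context
  fixes f :: "'p \<Rightarrow> 'b"
  assumes inj_f: "inj_on f P"
begin

lemma network_relation_subset: "network_relation f x \<subseteq> f ` P \<times> f ` P"
  unfolding network_relation_def by auto

lemma mem_network_relation_iff:
  "p \<in> P \<Longrightarrow> q \<in> P \<Longrightarrow> (f p, f q) \<in> network_relation f x \<longleftrightarrow> L p q \<le> x"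
  unfolding network_relation_def using inj_f by (auto dest: inj_onD)

lemma inj_network_relation: "inj (network_relation f)"
proof (rule injI, rule ccontr)
  fix x y
  assume "network_relation f x = network_relation f y" "x \<noteq> y"
  then obtain z w where zw: "network_relation f z = network_relation f w" "inf z (- w) \<noteq> bot"
    by (metis inf_shunt double_compl order.antisym)
  then obtain u where u: "is_atom u" "u \<le> z" "u \<le> - w"
    using atomic by (metis le_inf_iff)
  then obtain p q where "p \<in> P" "q \<in> P" "L p q = u" using atom_realized by blast
  with u zw show False
    using mem_network_relation_iff atom_le_compl_iff by metis
qed

lemma network_relation_cp:
  "network_relation f (cp x y) = network_relation f x O network_relation f y"
proof (rule relation_on_image_eqI[where f = f and P = P])
  fix p q assume pq: "p \<in> P" "q \<in> P"
  show "(f p, f q) \<in> network_relation f (cp x y) \<longleftrightarrow>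
      (f p, f q) \<in> network_relation f x O network_relation f y"
  proof
    assume "(f p, f q) \<in> network_relation f (cp x y)"
    then have "L p q \<le> cp x y" using mem_network_relation_iff pq by simp
    then obtain x' y' where "is_atom x'" "is_atom y'" "x' \<le> x" "y' \<le> y" "L p q \<le> cp x' y'"
      using atom_le_cp_decompose label_atom pq by metis
    moreover from this obtain w where "w \<in> P" "L p w = x'" "L w q = y'"
      using label_witness_atoms pq by blast
    ultimately show "(f p, f q) \<in> network_relation f x O network_relation f y"
      using mem_network_relation_iff pq by blast
  next
    assume "(f p, f q) \<in> network_relation f x O network_relation f y"
    then obtain w where w: "w \<in> P" "L p w \<le> x" "L w q \<le> y"
      using network_relation_subset mem_network_relation_iff pq by blast
    then have "cp (L p w) (L w q) \<le> cp x y"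
      using cp_mono_left cp_mono_right order.trans by blast
    then have "L p q \<le> cp x y" using label_le_cp[OF pq w(1)] by (rule order.trans[rotated])
    then show "(f p, f q) \<in> network_relation f (cp x y)" using mem_network_relation_iff pq by simp
  qed
qed (use network_relation_subset in \<open>auto simp: relcomp_unfold\<close>)

lemma network_relation_sup:
  "network_relation f (sup x y) = network_relation f x \<union> network_relation f y"
  by (rule relation_on_image_eqI[where f = f and P = P])
    (simp_all add: network_relation_subset mem_network_relation_iff atom_le_sup_iff label_atom)

lemma network_relation_compl: "network_relation f (- x) = f ` P \<times> f ` P - network_relation f x"
  by (rule relation_on_image_eqI[where f = f and P = P])
    (simp_all add: network_relation_subset mem_network_relation_iff atom_le_compl_iff label_atom)

lemma network_relation_e: "network_relation f e = Id_on (f ` P)"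
proof (rule relation_on_image_eqI[where f = f and P = P])
  fix p q assume "p \<in> P" "q \<in> P"
  then show "(f p, f q) \<in> network_relation f e \<longleftrightarrow> (f p, f q) \<in> Id_on (f ` P)"
    using inj_onD[OF inj_f] mem_network_relation_iff atom_le_atom_iff[OF label_atom atom_e]
      label_eq_e_iff
    by (auto simp: Id_on_def)
qed (auto simp: network_relation_subset)

lemma converse_network_relation: "(network_relation f x)\<inverse> = network_relation f x"
  by (rule relation_on_image_eqI[where f = f and P = P])
    (use network_relation_subset in \<open>auto simp: mem_network_relation_iff label_sym\<close>)

end

lemma representable_if_inj_on:
  fixes f :: "'p \<Rightarrow> 'a list"
  assumes "inj_on f P"
  shows "representable e (\<lambda>x. x) cp"
  unfolding representable_def
proof (intro exI[of _ "f ` P"] exI[of _ "f ` P \<times> f ` P"] exI[of _ "network_relation f"] conjI allI)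
  show "inj (network_relation f)" using assms by (rule inj_network_relation)
  show "network_relation f (cp x y) = network_relation f x O network_relation f y" for x y
    using assms by (rule network_relation_cp)
qed (simp_all add: assms network_relation_subset network_relation_sup network_relation_compl
    network_relation_e converse_network_relation equiv_def refl_on_def sym_def trans_def)

end

section \<open>Flexible trios\<close>

locale flexible_trio_ra = symmetric_integral_ra +
  fixes a b c :: 'a
  assumes trio: "flexible_trio e cp a b c"
begin

definition compatible :: "'a \<Rightarrow> 'a \<Rightarrow> bool" where
  "compatible t x \<longleftrightarrow> - e \<le> cp t x"

lemma cycle_if_compatible:
  "compatible t x \<Longrightarrow> is_atom t \<Longrightarrow> is_atom x \<Longrightarrow> div_atom e z \<Longrightarrow> cycle z t x"
  by (rule cycle_if_atoms_le_cp) (auto simp: compatible_def div_atom_def)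

lemma trio_div_atom: "t \<in> {a, b, c} \<Longrightarrow> div_atom e t"
  using trio unfolding flexible_trio_def by auto

lemma trio_compatible: "s \<in> {a, b, c} \<Longrightarrow> t \<in> {a, b, c} \<Longrightarrow> compatible s t"
  using trio cp_commute[of b a] cp_commute[of c a] cp_commute[of c b]
  unfolding flexible_trio_def compatible_def by auto

lemma div_atom_compatible_with_two:
  assumes "div_atom e x"
  shows "compatible a x \<and> compatible b x \<or> compatible a x \<and> compatible c x \<or> compatible b x \<and> compatible c x"
proof (cases "x \<in> {a, b, c}")
  case True
  then show ?thesis using trio_compatible by auto
next
  case False
  with assms have "is_atom x" "x \<notin> {e, a, b, c}" using div_atom_iff by auto
  then show ?thesis
    using trio cp_commute[of x a] cp_commute[of x b] cp_commute[of x c]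
    unfolding flexible_trio_def compatible_def by fastforce
qed

definition trio_choice :: "'a \<Rightarrow> 'a \<Rightarrow> 'a" where
  "trio_choice x y = (if compatible a x \<and> compatible a y then a
     else if compatible b x \<and> compatible b y then b else c)"

lemma trio_choice_mem: "trio_choice x y \<in> {a, b, c}"
  unfolding trio_choice_def by auto

lemma trio_choice_compatible:
  "div_atom e x \<Longrightarrow> div_atom e y \<Longrightarrow> compatible (trio_choice x y) x \<and> compatible (trio_choice x y) y"
  using div_atom_compatible_with_two[of x] div_atom_compatible_with_two[of y]
  unfolding trio_choice_def by auto

lemma one_point_extension: "one_point_ext e (\<lambda>x. x) cp"
  unfolding one_point_ext_def
proof (intro allI impI, elim conjE)
  fix k \<mu> x y i j
  assume net: "basic_net e (\<lambda>x. x) cp k \<mu>" and idc: "identity_cond e k \<mu>"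
    and x: "div_atom e x" and y: "div_atom e y" and ij: "i < k" "j < k" "i \<noteq> j"
    and \<mu>_ij: "\<mu> i j \<le> cp x y"
  define t where "t = trio_choice x y"
  have t: "div_atom e t" "compatible t x" "compatible t y" "compatible t t"
    using trio_choice_mem trio_choice_compatible[OF x y] trio_div_atom trio_compatible
    unfolding t_def by auto
  define \<nu> where "\<nu> l = (if l = i then x else if l = j then y else t)" for l
  have \<nu>_div: "div_atom e (\<nu> l)" for l
    using x y t unfolding \<nu>_def by auto
  have \<nu>_le: "\<mu> l m \<le> cp (\<nu> l) (\<nu> m)" if "l < k" "m < k" "l \<noteq> m" for l m
  proof (cases "{l, m} = {i, j}")
    case True
    have "\<mu> j i = \<mu> i j" using net ij unfolding basic_net_def by simp
    with True show ?thesis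
      using \<mu>_ij ij cp_commute[of x y] unfolding \<nu>_def by (auto simp: doubleton_eq_iff)
  next
    case False
    then have "compatible (\<nu> l) (\<nu> m)"
      using t cp_commute that unfolding \<nu>_def compatible_def by auto
    moreover have "div_atom e (\<mu> l m)" using net idc that by (rule basic_net_div_atom)
    ultimately show ?thesis unfolding compatible_def div_atom_def by (metis order.trans)
  qed
  show "\<exists>\<mu>'. basic_net e (\<lambda>x. x) cp (Suc k) \<mu>' \<and> identity_cond e (Suc k) \<mu>' \<and>
      (\<forall>l<k. \<forall>m<k. \<mu>' l m = \<mu> l m) \<and> \<mu>' i k = x \<and> \<mu>' k j = y"
  proof (intro exI[of _ "extend_net k \<mu> \<nu>"] conjI)
    show "basic_net e (\<lambda>x. x) cp (Suc k) (extend_net k \<mu> \<nu>)"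
      using net idc \<nu>_div \<nu>_le by (rule basic_net_extend_net)
    show "identity_cond e (Suc k) (extend_net k \<mu> \<nu>)"
      using net idc \<nu>_div by (rule identity_cond_extend_net)
  qed (use ij in \<open>auto simp: extend_net_def \<nu>_def\<close>)
qed

end

section \<open>A perfect network of witness points\<close>

(* Witness p q x y is a new point joined to p by x and to q by y. Points are coded injectively
  as lists, the base set used in the definition of representability. *)
datatype 'b point = Origin | Witness "'b point" "'b point" 'b 'b

fun point_code :: "'b \<Rightarrow> 'b \<Rightarrow> 'b point \<Rightarrow> 'b list" where
  "point_code d0 d1 Origin = [d0]"
| "point_code d0 d1 (Witness u v x y) = d1 # x # y # point_code d0 d1 u @ point_code d0 d1 v"

lemma point_code_append_eq:
  "d0 \<noteq> d1 \<Longrightarrow> point_code d0 d1 p @ xs = point_code d0 d1 q @ ys \<Longrightarrow> p = q \<and> xs = ys"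
proof (induction p arbitrary: q xs ys)
  case Origin
  then show ?case by (cases q) auto
next
  case (Witness u v x y)
  show ?case
  proof (cases q)
    case Origin
    with Witness.prems show ?thesis by auto
  next
    case (Witness u' v' x' y')
    with Witness.prems have "x = x'" "y = y'"
      and "point_code d0 d1 u @ (point_code d0 d1 v @ xs) = point_code d0 d1 u' @ (point_code d0 d1 v' @ ys)"
      by auto
    with Witness.IH Witness.prems(1) \<open>q = _\<close> show ?thesis by blast
  qed
qed

lemma inj_point_code: "d0 \<noteq> d1 \<Longrightarrow> inj (point_code d0 d1)"
  by (rule injI) (use point_code_append_eq[where xs = "[]" and ys = "[]"] in simp)

context flexible_trio_ra
begin

primrec component :: "'a point \<Rightarrow> 'a point \<Rightarrow> bool" where
  "component z Origin \<longleftrightarrow> False"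
| "component z (Witness u v x y) \<longleftrightarrow> z = u \<or> z = v"

primrec component_label :: "'a point \<Rightarrow> 'a point \<Rightarrow> 'a" where
  "component_label Origin z = e"
| "component_label (Witness u v x y) z = (if z = u then x else y)"

primrec trio_label :: "'a point \<Rightarrow> 'a" where
  "trio_label Origin = a" \<comment> \<open>arbitrary: Origin has no components\<close>
| "trio_label (Witness u v x y) = trio_choice x y"

definition trio_min :: "'a \<Rightarrow> 'a \<Rightarrow> 'a" where
  "trio_min s t = (if s = a \<or> t = a then a else if s = b \<or> t = b then b else c)"

(* Between points of equal size either trio label would do; trio_min just picks one symmetrically. *)
definition free_label :: "'a point \<Rightarrow> 'a point \<Rightarrow> 'a" where
  "free_label p q = (if size p < size q then trio_label q else if size q < size p then trio_label p
     else trio_min (trio_label p) (trio_label q))"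

definition adjacent :: "'a point \<Rightarrow> 'a point \<Rightarrow> bool" where
  "adjacent p q \<longleftrightarrow> component p q \<or> component q p"

definition label :: "'a point \<Rightarrow> 'a point \<Rightarrow> 'a" where
  "label p q = (if p = q then e else if component q p then component_label p q
     else if component p q then component_label q p else free_label p q)"

fun wf_point :: "'a point \<Rightarrow> bool" where
  "wf_point Origin \<longleftrightarrow> True"
| "wf_point (Witness u v x y) \<longleftrightarrow>
     wf_point u \<and> wf_point v \<and> div_atom e x \<and> div_atom e y \<and> label u v \<le> cp x y"

lemma component_size: "component z w \<Longrightarrow> size z < size w"
  by (cases w) auto

lemma label_refl [simp]: "label p p = e"
  unfolding label_def by simp

lemma label_sym: "label p q = label q p"
  unfolding label_def free_label_def trio_min_def using component_size by fastforce

lemma label_component: "component z w \<Longrightarrow> label w z = component_label w z"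
  unfolding label_def using component_size by fastforce

lemma label_free: "p \<noteq> q \<Longrightarrow> \<not> adjacent p q \<Longrightarrow> label p q = free_label p q"
  unfolding label_def adjacent_def by auto

lemma trio_label_mem: "trio_label p \<in> {a, b, c}"
  using trio_choice_mem by (cases p) auto

lemma free_label_cases: "free_label p q = trio_label p \<or> free_label p q = trio_label q"
  unfolding free_label_def trio_min_def using trio_label_mem[of p] trio_label_mem[of q] by auto

lemma component_label_div_atom: "wf_point w \<Longrightarrow> component z w \<Longrightarrow> div_atom e (component_label w z)"
  by (cases w) auto

lemma trio_label_compatible:
  "wf_point w \<Longrightarrow> component z w \<Longrightarrow> compatible (trio_label w) (component_label w z)"
  by (cases w) (auto simp: trio_choice_compatible)

lemma label_div_atom:
  assumes "wf_point p" "wf_point q" "p \<noteq> q"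
  shows "div_atom e (label p q)"
proof -
  consider "component q p" | "component p q" | "\<not> adjacent p q"
    unfolding adjacent_def by blast
  then show ?thesis
  proof cases
    case 1
    then show ?thesis using assms label_component component_label_div_atom by metis
  next
    case 2
    then show ?thesis using assms label_component component_label_div_atom label_sym by metis
  next
    case 3
    then show ?thesis
      using assms label_free free_label_cases trio_label_mem trio_div_atom by metis
  qed
qed

lemma label_atom: "wf_point p \<Longrightarrow> wf_point q \<Longrightarrow> is_atom (label p q)"
  using label_div_atom atom_e unfolding div_atom_def by (cases "p = q") auto

lemma label_eq_e_iff: "wf_point p \<Longrightarrow> wf_point q \<Longrightarrow> label p q = e \<longleftrightarrow> p = q"
  using label_div_atom div_atom_iff by auto

definition consistent_triangle :: "'a point \<Rightarrow> 'a point \<Rightarrow> 'a point \<Rightarrow> bool" where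
  "consistent_triangle p q r \<longleftrightarrow> cycle (label p q) (label q r) (label p r)"

lemma consistent_triangle_swap:
  "consistent_triangle p q r \<Longrightarrow> consistent_triangle q p r"
  "consistent_triangle p q r \<Longrightarrow> consistent_triangle p r q"
  "consistent_triangle p q r \<Longrightarrow> consistent_triangle q r p"
  unfolding consistent_triangle_def by (metis cycle_swap label_sym)+

lemma consistent_triangle_components:
  assumes "wf_point p" "wf_point q" "wf_point r" "p \<noteq> q" "component p r" "component q r"
  shows "consistent_triangle p q r"
proof -
  obtain u v x y where r: "r = Witness u v x y" and pq: "p = u \<and> q = v \<or> p = v \<and> q = u"
    using assms(4-6) by (cases r) auto
  have "label u v \<le> cp x y" using assms(3) r by simp
  then have "label p q \<le> cp (label r p) (label r q)"
    using pq assms(4) r label_component label_sym cp_commute by auto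
  then have "cycle (label p q) (label r p) (label r q)"
    using assms label_atom by (intro cycle_if_atoms_le_cp) auto
  then show ?thesis
    unfolding consistent_triangle_def using label_sym cycle_swap(2) by metis
qed

lemma consistent_triangle_two_free:
  assumes "wf_point p" "wf_point q" "wf_point r" "p \<noteq> q" "q \<noteq> r" "p \<noteq> r"
    and "\<not> adjacent p q" "\<not> adjacent q r"
  shows "consistent_triangle p q r"
proof -
  have "label p q \<in> {a, b, c}" "label q r \<in> {a, b, c}"
    using assms label_free free_label_cases trio_label_mem by metis+
  then have "cycle (label p r) (label p q) (label q r)"
    using assms label_div_atom trio_div_atom trio_compatible
    by (intro cycle_if_compatible) (auto simp: div_atom_def)
  then show ?thesis
    unfolding consistent_triangle_def by (rule cycle_swap(2)[OF cycle_swap(1)])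
qed

lemma consistent_triangle_one_free:
  assumes wf: "wf_point p" "wf_point q" "wf_point r" and "p \<noteq> q" "q \<noteq> r" "p \<noteq> r"
    and "\<not> adjacent p q" "adjacent q r" "adjacent p r"
  shows "consistent_triangle p q r"
proof (cases "component p r \<and> component q r")
  case True
  then show ?thesis using assms consistent_triangle_components by blast
next
  case False
  have free: "label p q = free_label p q" using assms label_free by blast
  \<comment> \<open>the free label is the trio label of a point having r as a component\<close>
  have "compatible (label p q) (label p r) \<or> compatible (label p q) (label q r)"
  proof -
    consider "component r p" "component r q" | "component r p" "component q r"
      | "component p r" "component r q"
      using False assms(8,9) unfolding adjacent_def by blast
    then show ?thesis
    proof cases
      case 1
      then show ?thesis
        using free free_label_cases trio_label_compatible wf label_component label_sym by metis
    next
      case 2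
      then have "size q < size p" using component_size by (meson less_trans)
      then have "label p q = trio_label p" using free by (simp add: free_label_def)
      then show ?thesis using 2 trio_label_compatible wf label_component by metis
    next
      case 3
      then have "size p < size q" using component_size by (meson less_trans)
      then have "label p q = trio_label q" using free by (simp add: free_label_def)
      then show ?thesis using 3 trio_label_compatible wf label_component label_sym by metis
    qed
  qed
  moreover have "is_atom (label p q)" "is_atom (label p r)" "is_atom (label q r)"
    using wf label_atom by auto
  moreover have "div_atom e (label p r)" "div_atom e (label q r)"
    using assms label_div_atom by auto
  ultimately have "cycle (label q r) (label p q) (label p r) \<or> cycle (label p r) (label p q) (label q r)"
    using cycle_if_compatible by blast
  then show ?thesis
    unfolding consistent_triangle_def using cycle_swap by blast
qed

lemma consistent_triangle_all_adjacent:
  assumes "wf_point p" "wf_point q" "wf_point r" "p \<noteq> q" "q \<noteq> r" "p \<noteq> r"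
    and "adjacent p q" "adjacent q r" "adjacent p r"
  shows "consistent_triangle p q r"
proof -
  have "component p r \<and> component q r \<or> component p q \<and> component r q \<or> component q p \<and> component r p"
    using assms(7-9) component_size unfolding adjacent_def by (meson less_trans not_less_iff_gr_or_eq)
  then show ?thesis
  proof (elim disjE conjE)
    assume "component p r" "component q r"
    with assms show ?thesis by (intro consistent_triangle_components)
  next
    assume "component p q" "component r q"
    with assms have "consistent_triangle p r q" by (intro consistent_triangle_components)
    then show ?thesis by (rule consistent_triangle_swap(2))
  next
    assume "component q p" "component r p"
    with assms have "consistent_triangle q r p" by (intro consistent_triangle_components)
    then show ?thesis by (rule consistent_triangle_swap(3)[OF consistent_triangle_swap(3)])
  qed
qed

lemma consistent_triangle_if_not_adjacent:
  assumes "wf_point p" "wf_point q" "wf_point r" "p \<noteq> q" "q \<noteq> r" "p \<noteq> r"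
    and "\<not> adjacent p q"
  shows "consistent_triangle p q r"
proof -
  consider "adjacent q r" "adjacent p r" | "\<not> adjacent q r" | "\<not> adjacent p r" by blast
  then show ?thesis
  proof cases
    case 1
    with assms show ?thesis by (intro consistent_triangle_one_free)
  next
    case 2
    with assms show ?thesis by (intro consistent_triangle_two_free)
  next
    case 3
    with assms have "consistent_triangle q p r"
      by (intro consistent_triangle_two_free) (auto simp: adjacent_def)
    then show ?thesis by (rule consistent_triangle_swap(1))
  qed
qed

lemma consistent_triangle:
  assumes "wf_point p" "wf_point q" "wf_point r" "p \<noteq> q" "q \<noteq> r" "p \<noteq> r"
  shows "consistent_triangle p q r"
proof -
  consider "adjacent p q" "adjacent q r" "adjacent p r"
    | "\<not> adjacent p q" | "\<not> adjacent q r" | "\<not> adjacent p r" by blast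
  then show ?thesis
  proof cases
    case 1
    with assms show ?thesis by (intro consistent_triangle_all_adjacent)
  next
    case 2
    with assms show ?thesis by (intro consistent_triangle_if_not_adjacent)
  next
    case 3
    with assms have "consistent_triangle q r p" by (intro consistent_triangle_if_not_adjacent) auto
    then show ?thesis by (rule consistent_triangle_swap(3)[OF consistent_triangle_swap(3)])
  next
    case 4
    with assms have "consistent_triangle p r q" by (intro consistent_triangle_if_not_adjacent) auto
    then show ?thesis by (rule consistent_triangle_swap(2))
  qed
qed

lemma label_le_cp:
  "wf_point p \<Longrightarrow> wf_point q \<Longrightarrow> wf_point r \<Longrightarrow> label p q \<le> cp (label p r) (label r q)"
  by (rule network_le_cp_if_cycles[where S = "{p. wf_point p}"])
    (auto simp: label_sym label_atom consistent_triangle[unfolded consistent_triangle_def])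

lemma wf_point_Witness:
  assumes "wf_point p" "wf_point q" "div_atom e x" "div_atom e y" "label p q \<le> cp x y"
  shows "wf_point (Witness p q x y)" "label p (Witness p q x y) = x" "label (Witness p q x y) q = y"
proof -
  show "wf_point (Witness p q x y)" using assms by simp
  show "label p (Witness p q x y) = x"
    using label_component[of p "Witness p q x y"] label_sym by simp
  show "label (Witness p q x y) q = y"
  proof (cases "q = p")
    case True
    with assms have "x = y" using atom_eq_if_e_le_cp unfolding div_atom_def by simp
    with True show ?thesis using label_component[of q "Witness p q x y"] by simp
  qed (simp add: label_component)
qed

lemma perfect_network_points: "perfect_network e cp {p. wf_point p} label"
proof (intro perfect_network.intro perfect_network_axioms.intro)
  show "symmetric_integral_ra e cp" by (rule symmetric_integral_ra_axioms)
  show "{p. wf_point p} \<noteq> {}" using wf_point.simps(1) by blast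
  show "\<exists>w\<in>{p. wf_point p}. label p w = x \<and> label w q = y"
    if "p \<in> {p. wf_point p}" "q \<in> {p. wf_point p}" "div_atom e x" "div_atom e y" "label p q \<le> cp x y"
    for p q x y
    using that wf_point_Witness by blast
  show "label p q \<le> cp (label p r) (label r q)"
    if "p \<in> {p. wf_point p}" "q \<in> {p. wf_point p}" "r \<in> {p. wf_point p}" for p q r
    using that label_le_cp by simp
qed (simp_all add: label_atom label_eq_e_iff label_sym)

lemma representable: "representable e (\<lambda>x. x) cp"
  using perfect_network.representable_if_inj_on[OF perfect_network_points]
    inj_point_code[OF bot_neq_top] inj_on_subset subset_UNIV
  by blast

end

lemma symmetric_integral_ra_if_rel_alg:
  assumes "rel_alg e (\<lambda>x. x) cp" "atomic_ba TYPE('a::boolean_algebra)" "integral_ra (e::'a)"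
  shows "symmetric_integral_ra e cp"
  using assms unfolding rel_alg_def atomic_ba_def integral_ra_def
  by unfold_locales (simp_all, metis)

theorem theorem4:
  fixes e :: "'a::boolean_algebra" and cv :: "'a \<Rightarrow> 'a" and cp :: "'a \<Rightarrow> 'a \<Rightarrow> 'a"
  assumes "rel_alg e cv cp"
    and "atomic_ba TYPE('a)"
    and "symmetric_ra cv"
    and "integral_ra e"
    and "has_flexible_trio e cp"
  shows "one_point_ext e cv cp \<and> representable e cv cp"
proof -
  have cv: "cv = (\<lambda>x. x)" using assms(3) unfolding symmetric_ra_def by auto
  obtain a b c where "flexible_trio e cp a b c"
    using assms(5) unfolding has_flexible_trio_def by blast
  moreover have "symmetric_integral_ra e cp"
    using symmetric_integral_ra_if_rel_alg assms(1,2,4) cv by blast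
  ultimately interpret flexible_trio_ra e cp a b c
    by (simp add: flexible_trio_ra.intro flexible_trio_ra_axioms.intro)
  show ?thesis using one_point_extension representable cv by simp
qed

end
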